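(* Let $D\geq 2$ and $2\leq r\leq D^2$. Then the set of primitive completely positive maps on $\mathcal{M}_D(\mathbb{C})$ of Kraus rank $r$ is non-empty.
   Context: A CP map on $\mathcal{M}_D(\mathbb{C})$ has the form $\mathcal{T}(X)=\sum_iA_iXA_i^\dagger$; its Kraus rank is the minimal number of such $A_i$, equal to the rank of the Choi matrix $\omega(\mathcal{T})=(\mathcal{T}\otimes\mathrm{id})(|\varphi\rangle\langle\varphi|)$, $\varphi=\sum_i|ii\rangle$ (so it is at most $D^2$). $\mathcal{T}$ is primitive iff there exists $n\in\mathbb{N}$ with $\mathrm{rank}\,\omega(\mathcal{T}^n)=D^2$. *)

theory Defs
  imports "Jordan_Normal_Form.DL_Rank" "Jordan_Normal_Form.Schur_Decomposition"
begin

text \<open>A linear map on M_D(C) is modelled as a function complex mat => complex mat;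
  only its values on carrier_mat D D matter.\<close>

definition kraus_sum :: "nat \<Rightarrow> complex mat list \<Rightarrow> complex mat \<Rightarrow> complex mat" where
  "kraus_sum D As X = foldr (\<lambda>A S. A * X * mat_adjoint A + S) As (0\<^sub>m D D)"

definition is_kraus_rep :: "nat \<Rightarrow> (complex mat \<Rightarrow> complex mat) \<Rightarrow> complex mat list \<Rightarrow> bool" where
  "is_kraus_rep D T As \<longleftrightarrow> set As \<subseteq> carrier_mat D D \<and>
     (\<forall>X \<in> carrier_mat D D. T X = kraus_sum D As X)"

definition cp_map :: "nat \<Rightarrow> (complex mat \<Rightarrow> complex mat) \<Rightarrow> bool" where
  "cp_map D T \<longleftrightarrow> (\<exists>As. is_kraus_rep D T As)"

definition kraus_rank :: "nat \<Rightarrow> (complex mat \<Rightarrow> complex mat) \<Rightarrow> nat" where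
  "kraus_rank D T = (LEAST k. \<exists>As. is_kraus_rep D T As \<and> length As = k)"

definition mat_unit :: "nat \<Rightarrow> nat \<Rightarrow> nat \<Rightarrow> complex mat" where
  "mat_unit D i j = mat D D (\<lambda>(a,b). if a = i \<and> b = j then 1 else 0)"

text \<open>Choi matrix (T \<otimes> id)(|phi><phi|), phi = sum_i |ii>, with tensor basis index
  |a> \<otimes> |i> |-> a * D + i, i.e. entry ((a,i),(b,j)) = T(|i><j|)_{a,b}.\<close>
definition choi :: "nat \<Rightarrow> (complex mat \<Rightarrow> complex mat) \<Rightarrow> complex mat" where
  "choi D T = mat (D*D) (D*D)
     (\<lambda>(p,q). T (mat_unit D (p mod D) (q mod D)) $$ (p div D, q div D))"

definition primitive :: "nat \<Rightarrow> (complex mat \<Rightarrow> complex mat) \<Rightarrow> bool" where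
  "primitive D T \<longleftrightarrow> (\<exists>n::nat. vec_space.rank (D*D) (choi D (T ^^ n)) = D^2)"

end

theory Submission
  imports Defs "Jordan_Normal_Form.DL_Rank_Submatrix"
begin

text \<open>
  The witness is \<open>T X = S X S\<^sup>* + (\<Sum>p\<in>P. E\<^sub>p X E\<^sub>p\<^sup>*)\<close>, with \<open>S\<close> the cyclic shift and
  \<open>E\<^sub>p\<close> the matrix units at \<open>r - 1\<close> positions \<open>P\<close> that contain \<open>|0\<rangle>\<langle>0|\<close> but avoid \<open>|1\<rangle>\<langle>0|\<close>,
  an entry of \<open>S\<close>. The Choi matrix of \<open>T\<close> is \<open>vec S vec S\<^sup>*\<close> plus the diagonal projection
  onto \<open>P\<close>; as \<open>vec S\<close> is not in the span of the basis vectors at \<open>P\<close>, its rank is \<open>r\<close>,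
  and the rank of the Choi matrix bounds the length of every Kraus representation from below.

  The maps sending \<open>X\<close> to the matrix with entries
  \<open>X\<^bsub>\<sigma> a, \<sigma> b\<^esub> + [a = b] \<Sum>\<^sub>k c\<^bsub>a k\<^esub> X\<^bsub>k k\<^esub>\<close> are closed under composition, so every
  power \<open>T\<^sup>n\<close> has this form, and the loop at \<open>|0\<rangle>\<langle>0|\<close> combined with the shift makes the
  coefficients \<open>c\<close> of \<open>T\<^bsup>2D\<^esup>\<close> all positive. The Choi matrix of \<open>T\<^bsup>2D\<^esup>\<close> is then a
  rank-one 0/1 matrix plus a positive diagonal, which is nonsingular.
\<close>

lemma mat_adjoint_carrier [simp]: "A \<in> carrier_mat n m \<Longrightarrow> mat_adjoint A \<in> carrier_mat m n"
  by (simp add: mat_adjoint_def mat_of_rows_def)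

lemma index_mat_adjoint [simp]:
  "i < dim_col A \<Longrightarrow> j < dim_row A \<Longrightarrow> mat_adjoint A $$ (i, j) = conjugate (A $$ (j, i))"
  by (simp add: mat_adjoint_def mat_of_rows_def)

lemma index_mult_mat_sum:
  "A \<in> carrier_mat n k \<Longrightarrow> B \<in> carrier_mat k m \<Longrightarrow> i < n \<Longrightarrow> j < m \<Longrightarrow>
    (A * B) $$ (i, j) = (\<Sum>c<k. A $$ (i, c) * B $$ (c, j))"
  by (auto simp: scalar_prod_def atLeast0LessThan intro!: sum.cong)

lemma index_mult_mat_vec_sum:
  "A \<in> carrier_mat n k \<Longrightarrow> v \<in> carrier_vec k \<Longrightarrow> i < n \<Longrightarrow>
    (A *\<^sub>v v) $ i = (\<Sum>j<k. A $$ (i, j) * v $ j)"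
  by (auto simp: scalar_prod_def atLeast0LessThan intro!: sum.cong)

lemma mat_unit_carrier [simp]:
  "mat_unit D i j \<in> carrier_mat D D" "dim_row (mat_unit D i j) = D" "dim_col (mat_unit D i j) = D"
  by (simp_all add: mat_unit_def)

lemma index_mat_unit [simp]:
  "a < D \<Longrightarrow> b < D \<Longrightarrow> mat_unit D i j $$ (a, b) = (if a = i \<and> b = j then 1 else 0)"
  by (simp add: mat_unit_def)

lemma conj_mat_unit_index:
  assumes A: "A \<in> carrier_mat D D" and "i < D" "j < D" "a < D" "b < D"
  shows "(A * mat_unit D i j * mat_adjoint A) $$ (a, b) = A $$ (a, i) * conjugate (A $$ (b, j))"
proof -
  have AE: "A * mat_unit D i j = mat D D (\<lambda>(a, d). if d = j then A $$ (a, i) else 0)"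
  proof (rule eq_matI)
    fix a d assume "a < dim_row (mat D D (\<lambda>(a, d). if d = j then A $$ (a, i) else 0))"
      "d < dim_col (mat D D (\<lambda>(a, d). if d = j then A $$ (a, i) else 0))"
    then have "a < D" "d < D" by auto
    then show "(A * mat_unit D i j) $$ (a, d) = mat D D (\<lambda>(a, d). if d = j then A $$ (a, i) else 0) $$ (a, d)"
      using assms by (simp add: index_mult_mat_sum[OF A mat_unit_carrier(1)] if_distrib[of "(*) _"]
          del: index_mult_mat cong: if_cong)
  qed (use A in auto)
  have "(A * mat_unit D i j * mat_adjoint A) $$ (a, b) =
      (\<Sum>d<D. (if d = j then A $$ (a, i) else 0) * conjugate (A $$ (b, d)))"
    using assms unfolding AE by (subst index_mult_mat_sum[of _ D D _ D]) auto
  also have "\<dots> = A $$ (a, i) * conjugate (A $$ (b, j))"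
    using assms by (simp add: if_distrib[of "\<lambda>x. x * _"] cong: if_cong)
  finally show ?thesis .
qed

lemma conj_partial_perm_index:
  fixes A X :: "complex mat"
  assumes A: "A \<in> carrier_mat D D"
    and A_entries: "\<And>a b. a < D \<Longrightarrow> b < D \<Longrightarrow> A $$ (a, b) = (if P a \<and> b = f a then 1 else 0)"
    and f: "\<And>a. a < D \<Longrightarrow> P a \<Longrightarrow> f a < D"
    and X: "X \<in> carrier_mat D D" and ab: "a < D" "b < D"
  shows "(A * X * mat_adjoint A) $$ (a, b) = (if P a \<and> P b then X $$ (f a, f b) else 0)"
proof -
  have AX: "(A * X) $$ (a', d) = (if P a' then X $$ (f a', d) else 0)" if "a' < D" "d < D" for a' d
    using that f by (simp add: index_mult_mat_sum[OF A X] A_entries if_distrib[of "\<lambda>x. x * _"]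
        del: index_mult_mat cong: if_cong)
  have "(A * X * mat_adjoint A) $$ (a, b) = (\<Sum>d<D. (A * X) $$ (a, d) * conjugate (A $$ (b, d)))"
    using A X ab by (subst index_mult_mat_sum[of _ D D _ D]) auto
  also have "\<dots> = (if P a \<and> P b then X $$ (f a, f b) else 0)"
    using ab f by (simp add: AX A_entries if_distrib[of cnj] if_distrib[of "\<lambda>x. _ * x"] cong: if_cong)
  finally show ?thesis .
qed

lemma kraus_sum_Nil [simp]: "kraus_sum D [] X = 0\<^sub>m D D"
  by (simp add: kraus_sum_def)

lemma kraus_sum_Cons [simp]: "kraus_sum D (A # As) X = A * X * mat_adjoint A + kraus_sum D As X"
  by (simp add: kraus_sum_def)

lemma kraus_sum_carrier:
  "set As \<subseteq> carrier_mat D D \<Longrightarrow> X \<in> carrier_mat D D \<Longrightarrow> kraus_sum D As X \<in> carrier_mat D D"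
  by (induction As) auto

lemma tensor_index_bounds:
  fixes p D :: nat assumes "p < D * D" shows "p div D < D" "p mod D < D"
proof -
  have "0 < D" using assms by (cases D) auto
  then show "p div D < D" "p mod D < D" using assms by (simp_all add: less_mult_imp_div_less)
qed

lemma choi_carrier [simp]:
  "choi D T \<in> carrier_mat (D * D) (D * D)" "dim_row (choi D T) = D * D" "dim_col (choi D T) = D * D"
  by (simp_all add: choi_def)

lemma index_choi:
  "p < D * D \<Longrightarrow> q < D * D \<Longrightarrow> choi D T $$ (p, q) = T (mat_unit D (p mod D) (q mod D)) $$ (p div D, q div D)"
  by (simp add: choi_def)

lemma choi_cong: "(\<And>X. X \<in> carrier_mat D D \<Longrightarrow> T X = T' X) \<Longrightarrow> choi D T = choi D T'"
  by (intro eq_matI) (simp_all add: index_choi)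

lemma rank_choi_kraus_sum_le:
  assumes "set As \<subseteq> carrier_mat D D"
  shows "vec_space.rank (D * D) (choi D (kraus_sum D As)) \<le> length As"
  using assms
proof (induction As)
  case Nil
  have "choi D (kraus_sum D []) = 0\<^sub>m (D * D) (D * D)"
    by (intro eq_matI) (simp_all add: index_choi tensor_index_bounds)
  then show ?case by (simp only: vec_space.rank_0I)
next
  case (Cons A As)
  then have A: "A \<in> carrier_mat D D" and As: "set As \<subseteq> carrier_mat D D" by auto
  define vecA where "vecA p = A $$ (p div D, p mod D)" for p
  define C where "C = mat (D * D) (D * D) (\<lambda>(p, q). vecA p * conjugate (vecA q))"
  have "choi D (kraus_sum D (A # As)) = C + choi D (kraus_sum D As)"
  proof (rule eq_matI)
    fix p q assume "p < dim_row (C + choi D (kraus_sum D As))" "q < dim_col (C + choi D (kraus_sum D As))"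
    then have pq: "p < D * D" "q < D * D" by (auto simp: C_def)
    then show "choi D (kraus_sum D (A # As)) $$ (p, q) = (C + choi D (kraus_sum D As)) $$ (p, q)"
      using carrier_matD[OF kraus_sum_carrier[OF As mat_unit_carrier(1)]] carrier_matD[OF A] A
        tensor_index_bounds[OF pq(1)] tensor_index_bounds[OF pq(2)]
      by (simp add: index_choi C_def vecA_def conj_mat_unit_index del: index_mult_mat)
  qed (simp_all add: C_def)
  moreover have "vec_space.rank (D * D) C \<le> 1"
    by (rule vec_space.rank_le_1_product_entries[of C "D * D" "D * D" vecA "\<lambda>q. conjugate (vecA q)"])
      (auto simp: C_def)
  moreover have "vec_space.rank (D * D) (C + choi D (kraus_sum D As)) \<le>
      vec_space.rank (D * D) C + vec_space.rank (D * D) (choi D (kraus_sum D As))"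
    by (rule vec_space.rank_subadditive[of _ _ "D * D"]) (simp_all add: C_def)
  ultimately show ?case using Cons.IH[OF As] by (simp del: kraus_sum_Cons)
qed

lemma kraus_rank_eqI:
  assumes rep: "is_kraus_rep D T As" and "length As \<le> vec_space.rank (D * D) (choi D T)"
  shows "kraus_rank D T = length As"
  unfolding kraus_rank_def
proof (rule Least_equality)
  fix k assume "\<exists>Bs. is_kraus_rep D T Bs \<and> length Bs = k"
  then obtain Bs where Bs: "is_kraus_rep D T Bs" "length Bs = k" by blast
  have "choi D T = choi D (kraus_sum D Bs)"
    using Bs(1) by (intro choi_cong) (simp add: is_kraus_rep_def)
  then show "length As \<le> k"
    using assms(2) rank_choi_kraus_sum_le[of Bs D] Bs by (simp add: is_kraus_rep_def)
qed (use rep in blast)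

lemma det_indicator_plus_diagonal_neq_0:
  fixes M :: "complex mat" and w :: "nat \<Rightarrow> bool" and d :: "nat \<Rightarrow> nat"
  assumes M: "M \<in> carrier_mat n n"
    and entries: "\<And>p q. p < n \<Longrightarrow> q < n \<Longrightarrow>
      M $$ (p, q) = (if w p \<and> w q then 1 else 0) + (if p = q then of_nat (d p) else 0)"
    and zero_marked: "\<And>p. p < n \<Longrightarrow> d p = 0 \<Longrightarrow> w p"
    and zero_unique: "\<And>p q. p < n \<Longrightarrow> q < n \<Longrightarrow> d p = 0 \<Longrightarrow> d q = 0 \<Longrightarrow> p = q"
  shows "det M \<noteq> 0"
proof
  assume "det M = 0"
  then obtain v where v: "v \<in> carrier_vec n" "v \<noteq> 0\<^sub>v n" "M *\<^sub>v v = 0\<^sub>v n"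
    using det_0_iff_vec_prod_zero_field[OF M] by blast
  define c where "c = (\<Sum>q<n. if w q then v $ q else 0)"
  have row: "(if w p then c else 0) + of_nat (d p) * v $ p = 0" if p: "p < n" for p
  proof -
    have "0 = (M *\<^sub>v v) $ p" using v(3) p by simp
    also have "\<dots> = (\<Sum>q<n. M $$ (p, q) * v $ q)"
      using p by (rule index_mult_mat_vec_sum[OF M v(1)])
    also have "\<dots> = (\<Sum>q<n. (if w p \<and> w q then v $ q else 0) + (if p = q then of_nat (d p) * v $ q else 0))"
      using p by (intro sum.cong) (auto simp: entries distrib_right)
    also have "\<dots> = (if w p then c else 0) + of_nat (d p) * v $ p"
      using p by (cases "w p") (simp_all add: sum.distrib c_def)
    finally show ?thesis by simp
  qed
  have c0: "c = 0"
  proof (cases "\<exists>p<n. d p = 0")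
    case True
    then obtain p where "p < n" "d p = 0" by blast
    then show ?thesis using row[of p] zero_marked[of p] by simp
  next
    case False
    then have vp: "v $ p = - (if w p then c else 0) / of_nat (d p)" if "p < n" for p
      using row[OF that] that by (auto simp: field_simps add_eq_0_iff)
    define s where "s = (\<Sum>q<n. if w q then 1 / real (d q) else 0)"
    have "s \<ge> 0" unfolding s_def by (intro sum_nonneg) auto
    have "c = (\<Sum>q<n. if w q then v $ q else 0)" by (fact c_def)
    also have "\<dots> = (\<Sum>q<n. if w q then - c / of_nat (d q) else 0)"
      by (rule sum.cong) (simp_all add: vp)
    also have "\<dots> = - c * of_real s"
      unfolding s_def of_real_sum sum_distrib_left by (rule sum.cong) simp_all
    finally have "c * (1 + of_real s) = 0" by (simp add: distrib_left eq_neg_iff_add_eq_0)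
    moreover have "(1 + of_real s :: complex) \<noteq> 0"
      using \<open>s \<ge> 0\<close> by (metis add_nonneg_eq_0_iff of_real_1 of_real_add of_real_eq_0_iff zero_le_one zero_neq_one)
    ultimately show ?thesis by simp
  qed
  have "v $ p = 0" if p: "p < n" for p
  proof (cases "d p = 0")
    case False
    then show ?thesis using row[OF p] unfolding c0 by simp
  next
    case True
    have others: "v $ q = 0" if "q < n" "q \<noteq> p" for q
      using row[of q] c0 zero_unique[OF p that(1) True] that by auto
    have "c = (\<Sum>q<n. if q = p then v $ q else 0)"
      unfolding c_def using zero_marked[OF p True] others by (intro sum.cong) auto
    then show ?thesis using c0 p by simp
  qed
  then have "v = 0\<^sub>v n" using v(1) by (intro eq_vecI) auto
  then show False using v(2) by simp
qed

definition shift_diag :: "nat \<Rightarrow> (nat \<Rightarrow> nat) \<Rightarrow> (nat \<Rightarrow> nat \<Rightarrow> nat) \<Rightarrow> complex mat \<Rightarrow> complex mat" where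
  "shift_diag D \<sigma> c X = mat D D (\<lambda>(a, b). X $$ (\<sigma> a, \<sigma> b) +
     (if a = b then (\<Sum>k<D. of_nat (c a k) * X $$ (k, k)) else 0))"

lemma shift_diag_carrier [simp]:
  "shift_diag D \<sigma> c X \<in> carrier_mat D D" "dim_row (shift_diag D \<sigma> c X) = D"
  "dim_col (shift_diag D \<sigma> c X) = D"
  by (simp_all add: shift_diag_def)

lemma index_shift_diag [simp]:
  "a < D \<Longrightarrow> b < D \<Longrightarrow> shift_diag D \<sigma> c X $$ (a, b) =
     X $$ (\<sigma> a, \<sigma> b) + (if a = b then (\<Sum>k<D. of_nat (c a k) * X $$ (k, k)) else 0)"
  by (simp add: shift_diag_def)

lemma shift_diag_id: "X \<in> carrier_mat D D \<Longrightarrow> shift_diag D (\<lambda>a. a) (\<lambda>_ _. 0) X = X"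
  by (intro eq_matI) auto

lemma shift_diag_comp:
  assumes \<sigma>: "\<And>a. a < D \<Longrightarrow> \<sigma> a < D" "inj_on \<sigma> {..<D}" and \<tau>: "\<And>a. a < D \<Longrightarrow> \<tau> a < D"
    and X: "X \<in> carrier_mat D D"
  shows "shift_diag D \<sigma> c (shift_diag D \<tau> d X) = shift_diag D (\<tau> \<circ> \<sigma>)
    (\<lambda>a k. d (\<sigma> a) k + (\<Sum>j<D. c a j * ((if k = \<tau> j then 1 else 0) + d j k))) X"
    (is "shift_diag D \<sigma> c ?Y = ?R" is "_ = shift_diag D _ ?e X")
proof (rule eq_matI)
  have Y_diag: "?Y $$ (j, j) = (\<Sum>k<D. of_nat ((if k = \<tau> j then 1 else 0) + d j k) * X $$ (k, k))"
    if "j < D" for j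
    using that \<tau> by (simp add: distrib_right sum.distrib if_distrib[of of_nat] if_distrib[of "\<lambda>x. x * _"] cong: if_cong)
  fix a b assume "a < dim_row ?R" "b < dim_col ?R"
  then have ab: "a < D" "b < D" by auto
  have "(\<Sum>k<D. of_nat (?e a k) * X $$ (k, k)) =
      (\<Sum>k<D. of_nat (d (\<sigma> a) k) * X $$ (k, k)) +
      (\<Sum>k<D. \<Sum>j<D. of_nat (c a j) * (of_nat ((if k = \<tau> j then 1 else 0) + d j k) * X $$ (k, k)))"
    by (simp only: of_nat_add of_nat_sum of_nat_mult distrib_right sum.distrib sum_distrib_right mult.assoc)
  also have "\<dots> = (\<Sum>k<D. of_nat (d (\<sigma> a) k) * X $$ (k, k)) + (\<Sum>j<D. of_nat (c a j) * ?Y $$ (j, j))"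
    by (simp only: sum.swap[of _ "{..<D}" "{..<D}"] sum_distrib_left[symmetric])
      (intro arg_cong2[where f = "(+)"] sum.cong, simp_all add: Y_diag del: index_shift_diag)
  finally have diag: "(\<Sum>k<D. of_nat (?e a k) * X $$ (k, k)) =
      (\<Sum>k<D. of_nat (d (\<sigma> a) k) * X $$ (k, k)) + (\<Sum>j<D. of_nat (c a j) * ?Y $$ (j, j))" .
  have "\<sigma> a = \<sigma> b \<longleftrightarrow> a = b" using \<sigma>(2) ab by (auto dest: inj_onD)
  with diag show "shift_diag D \<sigma> c ?Y $$ (a, b) = ?R $$ (a, b)"
    using ab \<sigma>(1) by auto
qed simp_all

primrec shift_diag_coeff :: "nat \<Rightarrow> (nat \<Rightarrow> nat) \<Rightarrow> (nat \<Rightarrow> nat \<Rightarrow> nat) \<Rightarrow> nat \<Rightarrow> nat \<Rightarrow> nat \<Rightarrow> nat" where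
  "shift_diag_coeff D \<sigma> c 0 = (\<lambda>_ _. 0)"
| "shift_diag_coeff D \<sigma> c (Suc n) = (\<lambda>a k. shift_diag_coeff D \<sigma> c n (\<sigma> a) k +
     (\<Sum>j<D. c a j * ((if k = (\<sigma> ^^ n) j then 1 else 0) + shift_diag_coeff D \<sigma> c n j k)))"

lemma funpow_closed: "(\<And>a. a < D \<Longrightarrow> \<sigma> a < D) \<Longrightarrow> a < D \<Longrightarrow> (\<sigma> ^^ n) a < D"
  by (induction n) auto

lemma shift_diag_funpow:
  assumes \<sigma>: "\<And>a. a < D \<Longrightarrow> \<sigma> a < D" "inj_on \<sigma> {..<D}" and X: "X \<in> carrier_mat D D"
  shows "(shift_diag D \<sigma> c ^^ n) X = shift_diag D (\<sigma> ^^ n) (shift_diag_coeff D \<sigma> c n) X"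
proof (induction n)
  case 0
  show ?case using shift_diag_id[OF X] by simp
next
  case (Suc n)
  have "(shift_diag D \<sigma> c ^^ Suc n) X = shift_diag D \<sigma> c (shift_diag D (\<sigma> ^^ n) (shift_diag_coeff D \<sigma> c n) X)"
    using Suc by simp
  also have "\<dots> = shift_diag D (\<sigma> ^^ Suc n) (shift_diag_coeff D \<sigma> c (Suc n)) X"
    by (simp add: shift_diag_comp[OF \<sigma> funpow_closed[OF \<sigma>(1)] X] funpow_Suc_right del: funpow.simps)
  finally show ?case .
qed

lemma index_choi_shift_diag:
  assumes \<sigma>: "\<And>a. a < D \<Longrightarrow> \<sigma> a < D" and "p < D * D" "q < D * D"
  shows "choi D (shift_diag D \<sigma> c) $$ (p, q) =
    (if \<sigma> (p div D) = p mod D \<and> \<sigma> (q div D) = q mod D then 1 else 0) +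
    (if p = q then of_nat (c (p div D) (p mod D)) else 0)"
proof -
  note bounds = tensor_index_bounds[OF assms(2)] tensor_index_bounds[OF assms(3)]
  have "p = q \<longleftrightarrow> p div D = q div D \<and> p mod D = q mod D"
    by (metis div_mult_mod_eq)
  then show ?thesis
    using bounds \<sigma>[OF bounds(1)] \<sigma>[OF bounds(3)]
    by (auto simp: index_choi assms if_distrib[of "\<lambda>x. _ * x"] cong: if_cong)
qed

definition cyclic_pred :: "nat \<Rightarrow> nat \<Rightarrow> nat" where
  "cyclic_pred D a = (a + D - 1) mod D"

lemma cyclic_pred_less: "0 < D \<Longrightarrow> cyclic_pred D a < D"
  by (simp add: cyclic_pred_def)

lemma cyclic_pred_eq: "a < D \<Longrightarrow> cyclic_pred D a = (if a = 0 then D - 1 else a - 1)"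
  by (auto simp: cyclic_pred_def mod_if)

lemma inj_on_cyclic_pred: "inj_on (cyclic_pred D) {..<D}"
  by (rule inj_onI) (auto simp: cyclic_pred_eq split: if_splits)

lemma funpow_cyclic_pred_le: "a < D \<Longrightarrow> n \<le> a \<Longrightarrow> (cyclic_pred D ^^ n) a = a - n"
proof (induction n)
  case (Suc n)
  then show ?case by (simp add: cyclic_pred_eq Suc_diff_Suc)
qed simp

lemma funpow_cyclic_pred_0: assumes "k < D" shows "(cyclic_pred D ^^ (D - k)) 0 = k"
proof -
  have "D - k = (D - 1 - k) + 1" using assms by simp
  then have "(cyclic_pred D ^^ (D - k)) 0 = (cyclic_pred D ^^ (D - 1 - k)) (D - 1)"
    using assms by (simp only: funpow_add) (simp add: cyclic_pred_eq)
  also have "\<dots> = k" using assms by (subst funpow_cyclic_pred_le) auto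
  finally show ?thesis .
qed

definition cyclic_shift :: "nat \<Rightarrow> complex mat" where
  "cyclic_shift D = mat D D (\<lambda>(a, b). if b = cyclic_pred D a then 1 else 0)"

lemma cyclic_shift_carrier [simp]: "cyclic_shift D \<in> carrier_mat D D"
  by (simp add: cyclic_shift_def)

lemma conj_cyclic_shift_index:
  "X \<in> carrier_mat D D \<Longrightarrow> a < D \<Longrightarrow> b < D \<Longrightarrow>
    (cyclic_shift D * X * mat_adjoint (cyclic_shift D)) $$ (a, b) = X $$ (cyclic_pred D a, cyclic_pred D b)"
  by (subst conj_partial_perm_index[where P = "\<lambda>_. True" and f = "cyclic_pred D"])
    (auto simp: cyclic_shift_def cyclic_pred_less)

text \<open>The matrix unit whose vectorisation, in the index convention of \<open>choi\<close>, is the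
  \<open>p\<close>-th basis vector.\<close>
definition tensor_unit :: "nat \<Rightarrow> nat \<Rightarrow> complex mat" where
  "tensor_unit D p = mat_unit D (p div D) (p mod D)"

lemma tensor_unit_carrier [simp]: "tensor_unit D p \<in> carrier_mat D D"
  by (simp add: tensor_unit_def)

lemma index_kraus_sum_tensor_units:
  assumes ps: "\<forall>p \<in> set ps. p < D * D" and X: "X \<in> carrier_mat D D" and ab: "a < D" "b < D"
  shows "kraus_sum D (map (tensor_unit D) ps) X $$ (a, b) =
    (if a = b then (\<Sum>k<D. of_nat (count_list ps (a * D + k)) * X $$ (k, k)) else 0)"
  using ps
proof (induction ps)
  case (Cons p ps)
  note bounds = tensor_index_bounds[of p D]
  have K: "kraus_sum D (map (tensor_unit D) ps) X \<in> carrier_mat D D"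
    using X by (intro kraus_sum_carrier) auto
  have U: "tensor_unit D p * X * mat_adjoint (tensor_unit D p) \<in> carrier_mat D D"
    using X by (intro mult_carrier_mat mat_adjoint_carrier) auto
  have conj: "(tensor_unit D p * X * mat_adjoint (tensor_unit D p)) $$ (a, b) =
      (if a = b \<and> a = p div D then X $$ (p mod D, p mod D) else 0)"
    unfolding tensor_unit_def using Cons.prems bounds
    by (subst conj_partial_perm_index[where P = "\<lambda>a. a = p div D" and f = "\<lambda>_. p mod D"])
      (auto simp: X ab)
  have count_sum: "(\<Sum>k<D. of_nat (count_list (p # ps) (a' * D + k)) * X $$ (k, k)) =
      (if a' = p div D then X $$ (p mod D, p mod D) else 0) +
      (\<Sum>k<D. of_nat (count_list ps (a' * D + k)) * X $$ (k, k))" for a'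
  proof -
    have "(\<Sum>k<D. of_nat (count_list (p # ps) (a' * D + k)) * X $$ (k, k)) =
        (\<Sum>k<D. (if k = p mod D then (if a' = p div D then X $$ (k, k) else 0) else 0) +
          of_nat (count_list ps (a' * D + k)) * X $$ (k, k))"
      by (intro sum.cong) (auto simp: distrib_right div_mult_mod_eq)
    then show ?thesis using Cons.prems bounds by (simp add: sum.distrib)
  qed
  show ?case
    using Cons K U ab by (simp add: conj count_sum del: count_list.simps)
qed (use ab in simp)

text \<open>Position \<open>D\<close> is \<open>|1\<rangle>\<langle>0|\<close>, an entry of the cyclic shift; skipping it keeps
  \<open>vec S\<close> outside the span of the chosen matrix units even when \<open>r = D\<^sup>2\<close>.\<close>
definition skip_index :: "nat \<Rightarrow> nat \<Rightarrow> nat" where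
  "skip_index D q = (if q < D then q else Suc q)"

definition unit_positions :: "nat \<Rightarrow> nat \<Rightarrow> nat list" where
  "unit_positions D m = map (skip_index D) [0..<m]"

definition shift_unit_map :: "nat \<Rightarrow> nat \<Rightarrow> complex mat \<Rightarrow> complex mat" where
  "shift_unit_map D m = shift_diag D (cyclic_pred D) (\<lambda>a k. count_list (unit_positions D m) (a * D + k))"

definition shift_unit_kraus :: "nat \<Rightarrow> nat \<Rightarrow> complex mat list" where
  "shift_unit_kraus D m = cyclic_shift D # map (tensor_unit D) (unit_positions D m)"

lemma distinct_unit_positions: "distinct (unit_positions D m)"
  by (auto simp: unit_positions_def skip_index_def distinct_map inj_on_def split: if_splits)

lemma unit_positions_less: "m < D * D \<Longrightarrow> p \<in> set (unit_positions D m) \<Longrightarrow> p < D * D"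
  by (auto simp: unit_positions_def skip_index_def)

lemma D_notin_unit_positions: "D \<notin> set (unit_positions D m)"
  by (auto simp: unit_positions_def skip_index_def)

lemma zero_in_unit_positions: "0 < D \<Longrightarrow> 0 < m \<Longrightarrow> 0 \<in> set (unit_positions D m)"
  by (force simp: unit_positions_def skip_index_def)

lemma shift_unit_map_kraus_rep:
  assumes "0 < D" "m < D * D"
  shows "is_kraus_rep D (shift_unit_map D m) (shift_unit_kraus D m)"
  unfolding is_kraus_rep_def
proof (intro conjI ballI)
  show "set (shift_unit_kraus D m) \<subseteq> carrier_mat D D"
    by (auto simp: shift_unit_kraus_def)
  fix X :: "complex mat" assume X: "X \<in> carrier_mat D D"
  have K: "kraus_sum D (map (tensor_unit D) (unit_positions D m)) X \<in> carrier_mat D D"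
    using X by (intro kraus_sum_carrier) auto
  have S: "cyclic_shift D * X * mat_adjoint (cyclic_shift D) \<in> carrier_mat D D"
    using X by (intro mult_carrier_mat mat_adjoint_carrier) auto
  show "shift_unit_map D m X = kraus_sum D (shift_unit_kraus D m) X"
    using K S X unit_positions_less[OF assms(2)]
    by (intro eq_matI) (auto simp: shift_unit_map_def shift_unit_kraus_def conj_cyclic_shift_index
        index_kraus_sum_tensor_units)
qed

lemma index_choi_shift_unit_map:
  assumes "0 < D" "p < D * D" "q < D * D"
  shows "choi D (shift_unit_map D m) $$ (p, q) =
    (if cyclic_pred D (p div D) = p mod D \<and> cyclic_pred D (q div D) = q mod D then 1 else 0) +
    (if p = q then of_nat (count_list (unit_positions D m) p) else 0)"
  unfolding shift_unit_map_def
  by (subst index_choi_shift_diag) (simp_all add: assms cyclic_pred_less)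

lemma rank_choi_shift_unit_map:
  assumes D: "2 \<le> D" and m: "m < D * D"
  shows "Suc m \<le> vec_space.rank (D * D) (choi D (shift_unit_map D m))"
proof -
  let ?C = "choi D (shift_unit_map D m)" and ?ps = "unit_positions D m"
  define J where "J = insert D (set ?ps)"
  have "D * 1 < D * D" using D by (intro mult_strict_left_mono) auto
  then have J_less: "{j. j < D * D \<and> j \<in> J} = J"
    using unit_positions_less[OF m] by (auto simp: J_def)
  have card_J: "card J = Suc m"
    by (simp add: J_def D_notin_unit_positions distinct_card[OF distinct_unit_positions])
      (simp add: unit_positions_def)
  define B where "B = submatrix ?C J J"
  have B: "B \<in> carrier_mat (card J) (card J)"
    by (intro carrier_matI) (simp_all add: B_def dim_submatrix J_less)
  have pick_J: "pick J i \<in> J" "pick J i < D * D" if "i < card J" for i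
    using that J_less pick_in_set_le[of i J] by auto
  have pick_J_inj: "pick J i = pick J j \<longleftrightarrow> i = j" if "i < card J" "j < card J" for i j
    using that pick_mono_le[of i J j] pick_mono_le[of j J i] by (cases i j rule: linorder_cases) auto
  have "det B \<noteq> 0"
  proof (rule det_indicator_plus_diagonal_neq_0[OF B])
    fix i j assume "i < card J" "j < card J"
    then show "B $$ (i, j) =
        (if cyclic_pred D (pick J i div D) = pick J i mod D \<and> cyclic_pred D (pick J j div D) = pick J j mod D
         then 1 else 0) + (if i = j then of_nat (count_list ?ps (pick J i)) else 0)"
      using D pick_J pick_J_inj
      by (simp add: B_def submatrix_index J_less index_choi_shift_unit_map)
  next
    fix i assume "i < card J" "count_list ?ps (pick J i) = 0"
    then have "pick J i = D" using pick_J(1) by (auto simp: J_def count_list_0_iff)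
    then show "cyclic_pred D (pick J i div D) = pick J i mod D" using D by (simp add: cyclic_pred_eq)
  next
    fix i j assume "i < card J" "j < card J" "count_list ?ps (pick J i) = 0" "count_list ?ps (pick J j) = 0"
    then have "pick J i = D" "pick J j = D" using pick_J(1) by (auto simp: J_def count_list_0_iff)
    then show "i = j" using pick_J_inj[OF \<open>i < card J\<close> \<open>j < card J\<close>] by simp
  qed
  then have "card {j. j < D * D \<and> j \<in> J} \<le> vec_space.rank (D * D) ?C"
    unfolding B_def by (intro vec_space.rank_gt_minor) simp
  then show ?thesis by (simp add: J_less card_J)
qed

lemma shift_diag_coeff_Suc_ge_pred:
  "shift_diag_coeff D \<sigma> c n (\<sigma> a) k \<le> shift_diag_coeff D \<sigma> c (Suc n) a k"
  by simp

lemma shift_diag_coeff_Suc_ge_term: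
  assumes "j < D"
  shows "c a j * ((if k = (\<sigma> ^^ n) j then 1 else 0) + shift_diag_coeff D \<sigma> c n j k) \<le>
    shift_diag_coeff D \<sigma> c (Suc n) a k"
proof -
  have "c a j * ((if k = (\<sigma> ^^ n) j then 1 else 0) + shift_diag_coeff D \<sigma> c n j k) \<le>
      (\<Sum>j<D. c a j * ((if k = (\<sigma> ^^ n) j then 1 else 0) + shift_diag_coeff D \<sigma> c n j k))"
    using assms by (intro member_le_sum) auto
  then show ?thesis by simp
qed

lemma shift_diag_coeff_cyclic_pred_le:
  "a < D \<Longrightarrow> shift_diag_coeff D (cyclic_pred D) c n 0 k \<le> shift_diag_coeff D (cyclic_pred D) c (n + a) a k"
proof (induction a)
  case (Suc a)
  then show ?case
    using shift_diag_coeff_Suc_ge_pred[of D "cyclic_pred D" c "n + a" "Suc a" k]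
    by (simp add: cyclic_pred_eq)
qed simp

lemma shift_diag_coeff_cyclic_pred_pos:
  assumes c: "0 < c 0 0" and "a < D" "k < D"
  shows "0 < shift_diag_coeff D (cyclic_pred D) c (2 * D) a k"
proof -
  let ?f = "\<lambda>n a. shift_diag_coeff D (cyclic_pred D) c n a k"
  have loop: "(if k = (cyclic_pred D ^^ n) 0 then 1 else 0) + ?f n 0 \<le> ?f (Suc n) 0" for n
  proof -
    have "(if k = (cyclic_pred D ^^ n) 0 then 1 else 0) + ?f n 0 \<le>
        c 0 0 * ((if k = (cyclic_pred D ^^ n) 0 then 1 else 0) + ?f n 0)"
      using c by simp
    also have "\<dots> \<le> ?f (Suc n) 0"
      using assms(2) by (intro shift_diag_coeff_Suc_ge_term) simp
    finally show ?thesis .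
  qed
  have "1 \<le> ?f (Suc (D - k)) 0"
    using loop[of "D - k"] funpow_cyclic_pred_0[OF assms(3)] by simp
  also have "\<dots> \<le> ?f (2 * D - a) 0"
  proof (rule lift_Suc_mono_le[of "\<lambda>n. ?f n 0"])
    show "?f n 0 \<le> ?f (Suc n) 0" for n using loop[of n] by simp
  qed (use assms in simp)
  also have "\<dots> \<le> ?f (2 * D) a"
    using shift_diag_coeff_cyclic_pred_le[OF assms(2), of c "2 * D - a" k] assms by simp
  finally show ?thesis by simp
qed

lemma primitive_shift_unit_map:
  assumes "0 < D" "0 < m"
  shows "primitive D (shift_unit_map D m)"
  unfolding primitive_def
proof
  let ?\<sigma> = "cyclic_pred D" and ?c = "\<lambda>a k. count_list (unit_positions D m) (a * D + k)"
  let ?M = "choi D (shift_unit_map D m ^^ (2 * D))"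
  have \<sigma>_pow: "(?\<sigma> ^^ (2 * D)) a < D" if "a < D" for a
    using that funpow_closed[of D ?\<sigma>] cyclic_pred_less[OF assms(1)] by blast
  have M: "?M = choi D (shift_diag D (?\<sigma> ^^ (2 * D)) (shift_diag_coeff D ?\<sigma> ?c (2 * D)))"
    unfolding shift_unit_map_def
    by (intro choi_cong shift_diag_funpow cyclic_pred_less[OF assms(1)] inj_on_cyclic_pred)
  have c: "0 < ?c 0 0"
    using zero_in_unit_positions[OF assms] count_list_0_iff[of "unit_positions D m" 0] by simp
  define d where "d p = shift_diag_coeff D ?\<sigma> ?c (2 * D) (p div D) (p mod D)" for p
  have d_pos: "0 < d p" if "p < D * D" for p
    unfolding d_def using shift_diag_coeff_cyclic_pred_pos[of ?c, OF c] tensor_index_bounds[OF that] .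
  have "det ?M \<noteq> 0"
  proof (rule det_indicator_plus_diagonal_neq_0[of ?M "D * D" "\<lambda>p. (?\<sigma> ^^ (2 * D)) (p div D) = p mod D" d])
    fix p q assume "p < D * D" "q < D * D"
    then show "?M $$ (p, q) =
        (if (?\<sigma> ^^ (2 * D)) (p div D) = p mod D \<and> (?\<sigma> ^^ (2 * D)) (q div D) = q mod D then 1 else 0) +
        (if p = q then of_nat (d p) else 0)"
      unfolding M d_def using \<sigma>_pow by (intro index_choi_shift_diag)
  qed (use d_pos in \<open>auto dest: less_not_refl2\<close>)
  then show "vec_space.rank (D * D) ?M = D\<^sup>2"
    using vec_space.det_rank_iff[of ?M "D * D"] by (simp add: power2_eq_square)
qed

theorem lemma3:
  fixes D r :: nat
  assumes "D \<ge> 2" and "2 \<le> r" and "r \<le> D^2"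
  shows "\<exists>T. cp_map D T \<and> primitive D T \<and> kraus_rank D T = r"
proof -
  define m where "m = r - 1"
  have D: "0 < D" and m: "0 < m" "m < D * D" and r: "r = Suc m"
    using assms by (auto simp: m_def power2_eq_square)
  have rep: "is_kraus_rep D (shift_unit_map D m) (shift_unit_kraus D m)"
    by (rule shift_unit_map_kraus_rep[OF D m(2)])
  have "length (shift_unit_kraus D m) = r"
    by (simp add: shift_unit_kraus_def unit_positions_def r)
  then have "kraus_rank D (shift_unit_map D m) = r"
    using kraus_rank_eqI[OF rep] rank_choi_shift_unit_map[OF assms(1) m(2)] r by simp
  then show ?thesis
    using rep primitive_shift_unit_map[OF D m(1)] unfolding cp_map_def by blast
qed

end
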